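(* For every formula $\varphi$, if $\vdash_{\mathbf{PTKv}^{+}}\varphi$ then $\varphi$ is valid (true at every world of every model).
   Context: Fix a countable set $\mathsf{Prop}$ of propositional variables, a countable set $\mathsf{Term}$ of atomic terms, and a finite set of agents $\mathcal{A}=\{1,\dots,n\}$. Let $\Theta_K=[0,1]\cap\mathbb{Q}$ and $\Theta_V^+=(\frac12,1]\cap\mathbb{Q}$. Formulas are generated by $\varphi::= p\mid t=s\mid\neg\varphi\mid(\varphi\to\psi)\mid K_i^\theta\varphi\mid Kv_i^\eta(t)$ with $p\in\mathsf{Prop}$, $t,s\in\mathsf{Term}$, $i\in\mathcal{A}$, $\theta\in\Theta_K$, $\eta\in\Theta_V^+$; other connectives are standard abbreviations. A model is $M=(W,D,\{P_i\}_{i\in\mathcal{A}},V,\mathsf{val})$ with $W\neq\emptyset$, $D\neq\emptyset$, $P_i(w)$ a countably additive probability measure on the powerset of $W$ for each $i,w$, $V:W\times\mathsf{Prop}\to\{0,1\}$, $\mathsf{val}:W\times\mathsf{Term}\to D$. Write $\llbracket\varphi\rrbracket^M=\{u\mid M,u\models\varphi\}$ and $\llbracket t=d\rrbracket^M=\{u\mid \mathsf{val}(u,t)=d\}$. Satisfaction: $M,w\models p$ iff $V(w,p)=1$; $M,w\models t=s$ iff $\mathsf{val}(w,t)=\mathsf{val}(w,s)$; Boolean clauses as usual; $M,w\models K_i^\theta\varphi$ iff $P_i(w)(\llbracket\varphi\rrbracket^M)\ge\theta$; $M,w\models Kv_i^\eta(t)$ iff there exists a unique $d\in D$ with $P_i(w)(\llbracket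 t=d\rrbracket^M)\ge\eta$. The system $\mathbf{PTKv}^{-}$ has rules Modus Ponens and $\mathrm{Nec}_K$ (from $\varphi$ infer $K_i^\theta\varphi$, for all $i\in\mathcal{A}$, $\theta\in\Theta_K$), and axiom schemata (for all agents $i$, terms $t,s,u$, formulas $\varphi,\psi$): all propositional tautologies; $t=t$; $t=s\to s=t$; $(t=s\wedge s=u)\to t=u$; $t=s\to((t=u)\leftrightarrow(s=u))$; $K_i^{\theta'}\varphi\to K_i^\theta\varphi$ for $\theta\le\theta'$ in $\Theta_K$; $K_i^\alpha(\varphi\to\psi)\to(K_i^\beta\varphi\to K_i^{\max\{0,\alpha+\beta-1\}}\psi)$ for $\alpha,\beta\in\Theta_K$; $K_i^\alpha\varphi\to\neg K_i^\beta\neg\varphi$ for $\alpha+\beta>1$; $K_i^0\varphi$; $K_i^1(t=s)\to(K_i^\theta(t=u)\leftrightarrow K_i^\theta(s=u))$ for $\theta\in\Theta_K$; $K_i^1(t=s)\to(Kv_i^\eta(t)\leftrightarrow Kv_i^\eta(s))$ for $\eta\in\Theta_V^+$. The system $\mathbf{PTKv}^{+}$ is $\mathbf{PTKv}^{-}$ plus the schemata: $K_i^1(\varphi\leftrightarrow\psi)\to(K_i^\theta\varphi\leftrightarrow K_i^\theta\psi)$ for $\theta\in\Theta_K$; $K_i^\alpha\varphi\wedge K_i^\beta\psi\wedge K_i^1\neg(\varphi\wedge\psi)\to K_i^{\alpha+\beta}(\varphi\vee\psi)$ for $\alpha,\beta\in\Theta_K$ with $\alpha+\beta\le1$; $Kv_i^\eta(t)\to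 Kv_i^\zeta(t)$ for $\eta,\zeta\in\Theta_V^+$ with $\zeta\le\eta$. *)

theory Defs
  imports "HOL-Probability.Probability"
begin

text \<open>Propositional variables 'p, atomic terms 't (both countable), agents 'i (finite).
  Thresholds are rationals; their admissible ranges are enforced by wf.\<close>

datatype ('p, 't, 'i) fm =
    Atom 'p
  | Eq 't 't
  | Neg "('p, 't, 'i) fm"
  | Imp "('p, 't, 'i) fm" "('p, 't, 'i) fm"
  | K 'i rat "('p, 't, 'i) fm"
  | Kv 'i rat 't

definition ThetaK :: "rat set" where "ThetaK = {q. 0 \<le> q \<and> q \<le> 1}"
definition ThetaV :: "rat set" where "ThetaV = {q. 1/2 < q \<and> q \<le> 1}"

primrec wf :: "('p, 't, 'i) fm \<Rightarrow> bool" where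
  "wf (Atom p) = True"
| "wf (Eq t s) = True"
| "wf (Neg a) = wf a"
| "wf (Imp a b) = (wf a \<and> wf b)"
| "wf (K i \<theta> a) = (\<theta> \<in> ThetaK \<and> wf a)"
| "wf (Kv i \<eta> t) = (\<eta> \<in> ThetaV)"

definition And :: "('p, 't, 'i) fm \<Rightarrow> ('p, 't, 'i) fm \<Rightarrow> ('p, 't, 'i) fm" where
  "And a b = Neg (Imp a (Neg b))"
definition Or :: "('p, 't, 'i) fm \<Rightarrow> ('p, 't, 'i) fm \<Rightarrow> ('p, 't, 'i) fm" where
  "Or a b = Imp (Neg a) b"
definition Iff :: "('p, 't, 'i) fm \<Rightarrow> ('p, 't, 'i) fm \<Rightarrow> ('p, 't, 'i) fm" where
  "Iff a b = And (Imp a b) (Imp b a)"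

datatype pf = PVar nat | PNeg pf | PImp pf pf

primrec peval :: "(nat \<Rightarrow> bool) \<Rightarrow> pf \<Rightarrow> bool" where
  "peval v (PVar n) = v n"
| "peval v (PNeg a) = (\<not> peval v a)"
| "peval v (PImp a b) = (peval v a \<longrightarrow> peval v b)"

definition taut :: "pf \<Rightarrow> bool" where "taut a = (\<forall>v. peval v a)"

primrec psubst :: "(nat \<Rightarrow> ('p, 't, 'i) fm) \<Rightarrow> pf \<Rightarrow> ('p, 't, 'i) fm" where
  "psubst \<sigma> (PVar n) = \<sigma> n"
| "psubst \<sigma> (PNeg a) = Neg (psubst \<sigma> a)"
| "psubst \<sigma> (PImp a b) = Imp (psubst \<sigma> a) (psubst \<sigma> b)"

text \<open>A model: worlds = the type 'w, domain = the type 'd (both nonempty),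
  P i w a countably additive probability measure on the powerset of the worlds.\<close>

definition is_model :: "('i \<Rightarrow> 'w \<Rightarrow> 'w measure) \<Rightarrow> bool" where
  "is_model P = (\<forall>i w. prob_space (P i w) \<and> space (P i w) = UNIV \<and> sets (P i w) = UNIV)"

primrec sat :: "('i \<Rightarrow> 'w \<Rightarrow> 'w measure) \<Rightarrow> ('w \<Rightarrow> 'p \<Rightarrow> bool) \<Rightarrow> ('w \<Rightarrow> 't \<Rightarrow> 'd)
    \<Rightarrow> 'w \<Rightarrow> ('p, 't, 'i) fm \<Rightarrow> bool" where
  "sat P V val w (Atom p) = V w p"
| "sat P V val w (Eq t s) = (val w t = val w s)"
| "sat P V val w (Neg a) = (\<not> sat P V val w a)"
| "sat P V val w (Imp a b) = (sat P V val w a \<longrightarrow> sat P V val w b)"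
| "sat P V val w (K i \<theta> a) = (measure (P i w) {u. sat P V val u a} \<ge> real_of_rat \<theta>)"
| "sat P V val w (Kv i \<eta> t) =
     (\<exists>!d. measure (P i w) {u. val u t = d} \<ge> real_of_rat \<eta>)"

definition valid_in :: "'w itself \<Rightarrow> 'd itself \<Rightarrow> ('p, 't, 'i) fm \<Rightarrow> bool" where
  "valid_in _ _ \<phi> = (\<forall>(P :: 'i \<Rightarrow> 'w \<Rightarrow> 'w measure) (V :: 'w \<Rightarrow> 'p \<Rightarrow> bool) (val :: 'w \<Rightarrow> 't \<Rightarrow> 'd) w.
       is_model P \<longrightarrow> sat P V val w \<phi>)"

inductive PTKv_plus :: "('p, 't, 'i) fm \<Rightarrow> bool" where
  taut: "taut A \<Longrightarrow> (\<forall>n. wf (\<sigma> n)) \<Longrightarrow> PTKv_plus (psubst \<sigma> A)"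
| eq_refl: "PTKv_plus (Eq t t)"
| eq_sym: "PTKv_plus (Imp (Eq t s) (Eq s t))"
| eq_trans: "PTKv_plus (Imp (And (Eq t s) (Eq s u)) (Eq t u))"
| eq_subst: "PTKv_plus (Imp (Eq t s) (Iff (Eq t u) (Eq s u)))"
| K_mono: "\<theta> \<in> ThetaK \<Longrightarrow> \<theta>' \<in> ThetaK \<Longrightarrow> \<theta> \<le> \<theta>' \<Longrightarrow> wf \<phi> \<Longrightarrow>
     PTKv_plus (Imp (K i \<theta>' \<phi>) (K i \<theta> \<phi>))"
| K_dist: "\<alpha> \<in> ThetaK \<Longrightarrow> \<beta> \<in> ThetaK \<Longrightarrow> wf \<phi> \<Longrightarrow> wf \<psi> \<Longrightarrow>
     PTKv_plus (Imp (K i \<alpha> (Imp \<phi> \<psi>)) (Imp (K i \<beta> \<phi>) (K i (max 0 (\<alpha> + \<beta> - 1)) \<psi>)))"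
| K_cons: "\<alpha> \<in> ThetaK \<Longrightarrow> \<beta> \<in> ThetaK \<Longrightarrow> \<alpha> + \<beta> > 1 \<Longrightarrow> wf \<phi> \<Longrightarrow>
     PTKv_plus (Imp (K i \<alpha> \<phi>) (Neg (K i \<beta> (Neg \<phi>))))"
| K_zero: "wf \<phi> \<Longrightarrow> PTKv_plus (K i 0 \<phi>)"
| K_eq: "\<theta> \<in> ThetaK \<Longrightarrow>
     PTKv_plus (Imp (K i 1 (Eq t s)) (Iff (K i \<theta> (Eq t u)) (K i \<theta> (Eq s u))))"
| Kv_eq: "\<eta> \<in> ThetaV \<Longrightarrow>
     PTKv_plus (Imp (K i 1 (Eq t s)) (Iff (Kv i \<eta> t) (Kv i \<eta> s)))"
| K_equiv: "\<theta> \<in> ThetaK \<Longrightarrow> wf \<phi> \<Longrightarrow> wf \<psi> \<Longrightarrow>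
     PTKv_plus (Imp (K i 1 (Iff \<phi> \<psi>)) (Iff (K i \<theta> \<phi>) (K i \<theta> \<psi>)))"
| K_add: "\<alpha> \<in> ThetaK \<Longrightarrow> \<beta> \<in> ThetaK \<Longrightarrow> \<alpha> + \<beta> \<le> 1 \<Longrightarrow> wf \<phi> \<Longrightarrow> wf \<psi> \<Longrightarrow>
     PTKv_plus (Imp (And (And (K i \<alpha> \<phi>) (K i \<beta> \<psi>)) (K i 1 (Neg (And \<phi> \<psi>))))
                    (K i (\<alpha> + \<beta>) (Or \<phi> \<psi>)))"
| Kv_mono: "\<eta> \<in> ThetaV \<Longrightarrow> \<zeta> \<in> ThetaV \<Longrightarrow> \<zeta> \<le> \<eta> \<Longrightarrow>
     PTKv_plus (Imp (Kv i \<eta> t) (Kv i \<zeta> t))"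
| MP: "PTKv_plus (Imp \<phi> \<psi>) \<Longrightarrow> PTKv_plus \<phi> \<Longrightarrow> PTKv_plus \<psi>"
| Nec: "PTKv_plus \<phi> \<Longrightarrow> \<theta> \<in> ThetaK \<Longrightarrow> PTKv_plus (K i \<theta> \<phi>)"

end

theory Submission
  imports Defs
begin

text \<open>Every axiom is valid because
  each world carries a probability measure on all sets of worlds: an event of probability 1
  is almost sure, so sets that agree on it have equal probability, which validates the
  substitution axioms and finite additivity; the distribution axiom is the inequality
  \<open>P(A \<inter> B) \<ge> P A + P B - 1\<close>; and a term can take at most one value with probability
  above \<open>1/2\<close>, which makes the uniqueness clause of \<open>Kv\<close> automatic.\<close>

lemma (in prob_space) prob_Int_lower:
  assumes "A \<in> events" "B \<in> events"
  shows "prob A + prob B - 1 \<le> prob (A \<inter> B)"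
  using measure_Un3[of A M B] prob_le_1[of "A \<union> B"] assms by (simp add: fmeasurable_eq_sets)

lemma (in prob_space) prob_eq_if_eq_on_prob_1:
  assumes "C \<in> events" "prob C = 1" "A \<in> events" "B \<in> events"
    and "\<And>x. x \<in> C \<Longrightarrow> x \<in> A \<longleftrightarrow> x \<in> B"
  shows "prob A = prob B"
proof (rule finite_measure_eq_AE)
  have "AE x in M. x \<in> C" using assms(1,2) prob_eq_1 by blast
  then show "AE x in M. x \<in> A \<longleftrightarrow> x \<in> B" by (auto simp: assms(5))
qed (use assms in auto)

lemma (in prob_space) Int_nonempty_if_prob_gt_half:
  assumes "A \<in> events" "B \<in> events" "prob A > 1/2" "prob B > 1/2"
  shows "A \<inter> B \<noteq> {}"
  using prob_Int_lower[OF assms(1,2)] assms(3,4) by auto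

lemma sat_And [simp]: "sat P V val w (And \<phi> \<psi>) \<longleftrightarrow> sat P V val w \<phi> \<and> sat P V val w \<psi>"
  by (simp add: And_def)

lemma sat_Or [simp]: "sat P V val w (Or \<phi> \<psi>) \<longleftrightarrow> sat P V val w \<phi> \<or> sat P V val w \<psi>"
  by (auto simp: Or_def)

lemma sat_Iff [simp]: "sat P V val w (Iff \<phi> \<psi>) \<longleftrightarrow> (sat P V val w \<phi> \<longleftrightarrow> sat P V val w \<psi>)"
  by (auto simp: Iff_def)

lemma sat_psubst: "sat P V val w (psubst \<sigma> A) \<longleftrightarrow> peval (\<lambda>n. sat P V val w (\<sigma> n)) A"
  by (induction A) auto

lemma is_model_prob_space: "is_model P \<Longrightarrow> prob_space (P i w)"
  by (simp add: is_model_def)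

lemma is_model_space [simp]: "is_model P \<Longrightarrow> space (P i w) = UNIV"
  by (simp add: is_model_def)

lemma is_model_sets [simp]: "is_model P \<Longrightarrow> A \<in> sets (P i w)"
  by (simp add: is_model_def)

lemma K_1_measure_cong:
  assumes "is_model P" "sat P V val w (K i 1 \<phi>)"
    and "\<And>u. sat P V val u \<phi> \<Longrightarrow> u \<in> A \<longleftrightarrow> u \<in> B"
  shows "measure (P i w) A = measure (P i w) B"
proof -
  interpret prob_space "P i w" using assms(1) by (rule is_model_prob_space)
  have certain: "prob {u. sat P V val u \<phi>} = 1" using assms(2) prob_le_1 by (simp add: antisym)
  show ?thesis
    by (rule prob_eq_if_eq_on_prob_1[OF _ certain]) (use assms in auto)
qed

lemma sat_Kv_iff_ex:
  assumes "is_model P" "real_of_rat \<eta> > 1/2"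
  shows "sat P V val w (Kv i \<eta> t) \<longleftrightarrow> (\<exists>d. measure (P i w) {u. val u t = d} \<ge> real_of_rat \<eta>)"
proof -
  interpret prob_space "P i w" using assms(1) by (rule is_model_prob_space)
  have "d = e" if "prob {u. val u t = d} \<ge> real_of_rat \<eta>" "prob {u. val u t = e} \<ge> real_of_rat \<eta>" for d e
    using Int_nonempty_if_prob_gt_half[of "{u. val u t = d}" "{u. val u t = e}"] that assms
    by auto
  then show ?thesis by auto
qed

lemma real_of_rat_gt_half:
  assumes "q \<in> ThetaV" shows "real_of_rat q > 1/2"
proof -
  have "real_of_rat (1/2) < real_of_rat q" using assms by (simp add: ThetaV_def of_rat_less)
  then show ?thesis by (simp add: of_rat_divide)
qed

lemma of_rat_max: "(of_rat (max a b) :: 'a :: linordered_field) = max (of_rat a) (of_rat b)"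
  by (auto simp: max_def of_rat_less_eq)

lemma valid_K_dist:
  assumes "is_model P"
  shows "sat P V val w (Imp (K i \<alpha> (Imp \<phi> \<psi>)) (Imp (K i \<beta> \<phi>) (K i (max 0 (\<alpha> + \<beta> - 1)) \<psi>)))"
proof -
  interpret prob_space "P i w" using assms by (rule is_model_prob_space)
  let ?A = "{u. sat P V val u (Imp \<phi> \<psi>)}" and ?B = "{u. sat P V val u \<phi>}"
  have "prob (?A \<inter> ?B) \<le> prob {u. sat P V val u \<psi>}"
    by (rule finite_measure_mono) (auto simp: assms)
  then have "prob ?A + prob ?B - 1 \<le> prob {u. sat P V val u \<psi>}"
    using prob_Int_lower[of ?A ?B] assms by simp
  moreover have "real_of_rat (max 0 (\<alpha> + \<beta> - 1)) = max 0 (real_of_rat \<alpha> + real_of_rat \<beta> - 1)"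
    by (simp add: of_rat_max of_rat_add of_rat_diff)
  ultimately show ?thesis by auto
qed

lemma valid_K_cons:
  assumes "is_model P" "\<alpha> + \<beta> > 1"
  shows "sat P V val w (Imp (K i \<alpha> \<phi>) (Neg (K i \<beta> (Neg \<phi>))))"
proof -
  interpret prob_space "P i w" using assms(1) by (rule is_model_prob_space)
  have "{u. \<not> sat P V val u \<phi>} = space (P i w) - {u. sat P V val u \<phi>}" using assms(1) by auto
  moreover have "real_of_rat \<alpha> + real_of_rat \<beta> > 1"
    using assms(2) by (metis of_rat_1 of_rat_add of_rat_less)
  ultimately show ?thesis using prob_compl[of "{u. sat P V val u \<phi>}"] assms(1) by auto
qed

lemma valid_K_eq:
  assumes "is_model P"
  shows "sat P V val w (Imp (K i 1 (Eq t s)) (Iff (K i \<theta> (Eq t u)) (K i \<theta> (Eq s u))))"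
  using K_1_measure_cong[OF assms, of V val w i "Eq t s" "{v. val v t = val v u}" "{v. val v s = val v u}"]
  by auto

lemma valid_Kv_eq:
  assumes "is_model P" "\<eta> \<in> ThetaV"
  shows "sat P V val w (Imp (K i 1 (Eq t s)) (Iff (Kv i \<eta> t) (Kv i \<eta> s)))"
  using K_1_measure_cong[OF assms(1), of V val w i "Eq t s" "{v. val v t = _}" "{v. val v s = _}"]
  by (auto simp: sat_Kv_iff_ex[OF assms(1) real_of_rat_gt_half[OF assms(2)]] simp del: sat.simps(6))

lemma valid_K_equiv:
  assumes "is_model P"
  shows "sat P V val w (Imp (K i 1 (Iff \<phi> \<psi>)) (Iff (K i \<theta> \<phi>) (K i \<theta> \<psi>)))"
  using K_1_measure_cong[OF assms, of V val w i "Iff \<phi> \<psi>" "{v. sat P V val v \<phi>}" "{v. sat P V val v \<psi>}"]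
  by auto

lemma valid_K_add:
  assumes "is_model P"
  shows "sat P V val w (Imp (And (And (K i \<alpha> \<phi>) (K i \<beta> \<psi>)) (K i 1 (Neg (And \<phi> \<psi>))))
                            (K i (\<alpha> + \<beta>) (Or \<phi> \<psi>)))"
proof (clarsimp simp del: sat.simps(5))
  interpret prob_space "P i w" using assms by (rule is_model_prob_space)
  let ?A = "{u. sat P V val u \<phi>}" and ?B = "{u. sat P V val u \<psi>}"
  assume "sat P V val w (K i \<alpha> \<phi>)" "sat P V val w (K i \<beta> \<psi>)"
    and "sat P V val w (K i 1 (Neg (And \<phi> \<psi>)))"
  moreover from this(3) have "prob (?A \<inter> ?B) = prob {}"
    by (rule K_1_measure_cong[OF assms]) auto
  moreover have "{u. sat P V val u (Or \<phi> \<psi>)} = ?A \<union> ?B" by auto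
  ultimately show "sat P V val w (K i (\<alpha> + \<beta>) (Or \<phi> \<psi>))"
    using measure_Un3[of ?A "P i w" ?B] assms by (simp add: fmeasurable_eq_sets of_rat_add)
qed

lemma valid_Kv_mono:
  assumes "is_model P" "\<eta> \<in> ThetaV" "\<zeta> \<in> ThetaV" "\<zeta> \<le> \<eta>"
  shows "sat P V val w (Imp (Kv i \<eta> t) (Kv i \<zeta> t))"
proof -
  have "real_of_rat \<zeta> \<le> real_of_rat \<eta>" using assms(4) by (simp add: of_rat_less_eq)
  then show ?thesis
    by (auto simp: sat_Kv_iff_ex[OF assms(1) real_of_rat_gt_half] assms(2,3)
             simp del: sat.simps(6) intro: order_trans)
qed

theorem PTKv_plus_sound: "PTKv_plus \<phi> \<Longrightarrow> is_model P \<Longrightarrow> sat P V val w \<phi>"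
proof (induction \<phi> arbitrary: w rule: PTKv_plus.induct)
  case (taut A \<sigma>)
  then show ?case by (simp add: sat_psubst taut_def)
next
  case (K_mono \<theta> \<theta>' \<phi> i)
  then have "real_of_rat \<theta> \<le> real_of_rat \<theta>'" by (simp add: of_rat_less_eq)
  then show ?case by auto
next
  case K_dist
  show ?case by (rule valid_K_dist[OF K_dist.prems])
next
  case K_cons
  show ?case by (rule valid_K_cons[OF K_cons.prems K_cons.hyps(3)])
next
  case K_eq
  show ?case by (rule valid_K_eq[OF K_eq.prems])
next
  case Kv_eq
  show ?case by (rule valid_Kv_eq[OF Kv_eq.prems Kv_eq.hyps])
next
  case K_equiv
  show ?case by (rule valid_K_equiv[OF K_equiv.prems])
next
  case K_add
  show ?case by (rule valid_K_add[OF K_add.prems])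
next
  case Kv_mono
  show ?case by (rule valid_Kv_mono[OF Kv_mono.prems Kv_mono.hyps])
next
  case (Nec \<phi> \<theta> i)
  interpret prob_space "P i w" using Nec(4) by (rule is_model_prob_space)
  have "{u. sat P V val u \<phi>} = space (P i w)" using Nec by auto
  moreover have "real_of_rat \<theta> \<le> real_of_rat 1" using Nec(2) by (simp add: ThetaK_def of_rat_less_eq)
  ultimately show ?case using prob_space by simp
qed auto

theorem corollary1:
  fixes \<phi> :: "('p :: countable, 't :: countable, 'i :: finite) fm"
  assumes "wf \<phi>" and "PTKv_plus \<phi>"
  shows "valid_in TYPE('w) TYPE('d) \<phi>"
  using PTKv_plus_sound[OF assms(2)] unfolding valid_in_def by blast

end
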